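(* Let $S\subset\mathbb{R}^2$ be a finite set of points in general position and let $a,b,c\in S$ be distinct. Then $ab$ is an exit edge of $S$ with witness $c$ if and only if the dual lines $a^*,b^*,c^*$ bound a triangular cell $\Delta$ of the arrangement $\mathcal{A}$ of the lines $S^*=\{s^*:s\in S\}$ in the projective plane such that $\Delta$ is not the marked cell, $c^*$ is the witness line of $\Delta$, and the point $a^*\cap b^*$ is the exit vertex of $\Delta$.
   Context: General position: no three points collinear. For distinct $a,b,c\in S$, $ab$ is an exit edge with witness $c$ if there is no $p\in S$ such that the line through $a$ and $p$ strictly separates $b$ from $c$, and no $p\in S$ such that the line through $b$ and $p$ strictly separates $a$ from $c$. Duality: a point $p=(p_x,p_y)$ is mapped to the line $p^*: y=p_x x-p_y$, regarded as a line in the real projective plane $\mathbb{P}^2$ (the Euclidean plane plus a line at infinity); $\mathcal{A}$ is the arrangement of the lines $S^*$ in $\mathbb{P}^2$, and its cells are the closures of the connected components of $\mathbb{P}^2$ minus the lines. The marked cell is the cell of $\mathcal{A}$ containing the point at infinity in the vertical direction. Each line $s^*$ is oriented in the direction of increasing $x$, and each side of a cell inherits this orientation. For a triangular cell $\Delta$ other than the marked cell, the oriented sides do not form a directed cycle, so exactly one vertex of $\Delta$ has one incident side directed into it and the other directed out of it; this vertex is the exit vertex of $\Delta$, and the line containing the side of $\Delta$ opposite to it is the witness line of $\Delta$. *)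

theory Defs
  imports "HOL-Analysis.Analysis" "HOL-Analysis.Cross3"
begin

definition orient :: "real \<times> real \<Rightarrow> real \<times> real \<Rightarrow> real \<times> real \<Rightarrow> real" where
  "orient p q r = (fst q - fst p) * (snd r - snd p) - (snd q - snd p) * (fst r - fst p)"

definition general_position :: "(real \<times> real) set \<Rightarrow> bool" where
  "general_position S \<longleftrightarrow>
     (\<forall>p\<in>S. \<forall>q\<in>S. \<forall>r\<in>S. p \<noteq> q \<and> p \<noteq> r \<and> q \<noteq> r \<longrightarrow> orient p q r \<noteq> 0)"

definition strictly_separates ::
    "real \<times> real \<Rightarrow> real \<times> real \<Rightarrow> real \<times> real \<Rightarrow> real \<times> real \<Rightarrow> bool" where
  "strictly_separates a p b c \<longleftrightarrow> a \<noteq> p \<and> orient a p b * orient a p c < 0"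

definition exit_edge :: "(real \<times> real) set \<Rightarrow> real \<times> real \<Rightarrow> real \<times> real \<Rightarrow> real \<times> real \<Rightarrow> bool" where
  "exit_edge S a b c \<longleftrightarrow>
     a \<in> S \<and> b \<in> S \<and> c \<in> S \<and> a \<noteq> b \<and> a \<noteq> c \<and> b \<noteq> c \<and>
     \<not> (\<exists>p\<in>S. p \<noteq> a \<and> strictly_separates a p b c) \<and>
     \<not> (\<exists>p\<in>S. p \<noteq> b \<and> strictly_separates b p a c)"

text \<open>The real projective plane is modelled by the unit sphere in \<open>real^3\<close>,
  a projective point (X:Y:Z) being represented by the antipodal pair of unit vectors
  on the line spanned by (X,Y,Z); the affine point (x,y) is (x:y:1).
  Subsets of the projective plane are represented by their (antipodally symmetric)
  preimages on the sphere.  The dual line of p, \<open>y = p_x x - p_y\<close>, is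
  \<open>p_x X - Y - p_y Z = 0\<close>, with normal vector \<open>dual_normal p\<close>.\<close>

definition S2 :: "(real^3) set" where
  "S2 = sphere 0 1"

definition dual_normal :: "real \<times> real \<Rightarrow> real^3" where
  "dual_normal p = vector [fst p, -1, - snd p]"

definition dual_line :: "real \<times> real \<Rightarrow> (real^3) set" where
  "dual_line p = {v \<in> S2. v \<bullet> dual_normal p = 0}"

text \<open>The complement of the arrangement, and its cells: closures of connected components
  of the projective plane minus the lines (preimage on the sphere: closure of a component
  together with its antipodal copy).\<close>

definition arr_complement :: "(real \<times> real) set \<Rightarrow> (real^3) set" where
  "arr_complement S = S2 - (\<Union>s\<in>S. dual_line s)"

definition is_cell :: "(real \<times> real) set \<Rightarrow> (real^3) set \<Rightarrow> bool" where
  "is_cell S D \<longleftrightarrow>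
     (\<exists>x \<in> arr_complement S.
        D = closure (connected_component_set (arr_complement S) x)
            \<union> uminus ` closure (connected_component_set (arr_complement S) x))"

definition vertical_infinity :: "real^3" where
  "vertical_infinity = vector [0, 1, 0]"

definition marked_cell :: "(real \<times> real) set \<Rightarrow> (real^3) set \<Rightarrow> bool" where
  "marked_cell S D \<longleftrightarrow> is_cell S D \<and> vertical_infinity \<in> D"

text \<open>Lines of the arrangement contributing a side to a cell (a side is a non-degenerate
  segment of the boundary of the cell lying on the line).\<close>

definition bounding_lines :: "(real \<times> real) set \<Rightarrow> (real^3) set \<Rightarrow> (real \<times> real) set" where
  "bounding_lines S D = {s \<in> S. infinite (D \<inter> dual_line s)}"

definition triangular_cell ::
    "(real \<times> real) set \<Rightarrow> (real^3) set \<Rightarrow> real \<times> real \<Rightarrow> real \<times> real \<Rightarrow> real \<times> real \<Rightarrow> bool" where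
  "triangular_cell S D a b c \<longleftrightarrow> is_cell S D \<and> bounding_lines S D = {a, b, c}"

text \<open>The intersection point of two dual lines (one representative on the sphere).\<close>

definition meet :: "real \<times> real \<Rightarrow> real \<times> real \<Rightarrow> real^3" where
  "meet a b = (1 / norm (cross3 (dual_normal a) (dual_normal b))) *\<^sub>R (cross3 (dual_normal a) (dual_normal b))"

text \<open>Orientation of the dual line of s: moving from a point v of the line by angle t
  along the great circle, in the direction which in the affine chart corresponds to
  increasing x (one checks that the tangent v cross n has positive x-speed in the chart).\<close>

definition move_along :: "real \<times> real \<Rightarrow> real^3 \<Rightarrow> real \<Rightarrow> real^3" where
  "move_along s v t =
     cos t *\<^sub>R v + (sin t / norm (dual_normal s)) *\<^sub>R (cross3 v (dual_normal s))"

definition side_into :: "(real^3) set \<Rightarrow> real \<times> real \<Rightarrow> real^3 \<Rightarrow> bool" where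
  "side_into D s v \<longleftrightarrow>
     (\<exists>e>0. \<forall>t. 0 < t \<and> t < e \<longrightarrow> move_along s v (-t) \<in> D) \<and>
     \<not> (\<exists>e>0. \<forall>t. 0 < t \<and> t < e \<longrightarrow> move_along s v t \<in> D)"

definition side_out_of :: "(real^3) set \<Rightarrow> real \<times> real \<Rightarrow> real^3 \<Rightarrow> bool" where
  "side_out_of D s v \<longleftrightarrow>
     (\<exists>e>0. \<forall>t. 0 < t \<and> t < e \<longrightarrow> move_along s v t \<in> D) \<and>
     \<not> (\<exists>e>0. \<forall>t. 0 < t \<and> t < e \<longrightarrow> move_along s v (-t) \<in> D)"

text \<open>A vertex of D with one incident side directed into it and the other directed out
  of it.  The exit vertex of a triangular non-marked cell is the unique such vertex.\<close>

definition in_out_vertex :: "(real \<times> real) set \<Rightarrow> (real^3) set \<Rightarrow> real^3 \<Rightarrow> bool" where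
  "in_out_vertex S D v \<longleftrightarrow>
     v \<in> D \<and>
     (\<exists>s\<in>bounding_lines S D. \<exists>t\<in>bounding_lines S D. s \<noteq> t \<and>
        v \<in> dual_line s \<and> v \<in> dual_line t \<and> side_into D s v \<and> side_out_of D t v)"

definition is_exit_vertex :: "(real \<times> real) set \<Rightarrow> (real^3) set \<Rightarrow> real^3 \<Rightarrow> bool" where
  "is_exit_vertex S D v \<longleftrightarrow>
     in_out_vertex S D v \<and> (\<forall>w. in_out_vertex S D w \<longrightarrow> w = v \<or> w = - v)"

definition is_witness_line :: "(real \<times> real) set \<Rightarrow> (real^3) set \<Rightarrow> real \<times> real \<Rightarrow> bool" where
  "is_witness_line S D c \<longleftrightarrow>
     c \<in> bounding_lines S D \<and> (\<exists>v. is_exit_vertex S D v \<and> v \<notin> dual_line c)"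

end

theory Submission
  imports Defs
begin

text \<open>
  A cell of the arrangement is, on the sphere, the set of points lying weakly on the same
  side of every dual line as an interior point x, together with its antipodal copy; it is a
  triangle bounded by a*, b*, c* exactly when the constraints of the other lines are
  redundant. At a vertex a* \<inter> b* the two sides run one into and one out of the vertex
  exactly when x is on the same side of a* and of b*. Hence a* \<inter> b* is the unique such
  vertex iff x has the sign pattern (+, +, -) on (a*, b*, c*) up to a global sign; the
  vertical point at infinity has the same sign on all dual lines, so it is not in such a cell.

  On the primal side, a line through a and a further point p separating b from c dualises
  to a vertex a* \<inter> p* of the closed triangle, so p* would carry a side of the cell.
  Conversely, if no such p exists, the orientations of (b, c, p), (c, a, p) and (a, b, p)
  have a fixed sign pattern for every other p, and expanding the normal of p* in the
  normals of a*, b*, c* with these coefficients puts the whole closed triangle strictly on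
  one side of p*.
\<close>

section \<open>Cells of the arrangement as sign cones\<close>

abbreviation \<nu> :: "real \<times> real \<Rightarrow> real^3" where "\<nu> s \<equiv> dual_normal s"

definition sign_cone :: "(real \<times> real) set \<Rightarrow> real^3 \<Rightarrow> (real^3) set" where
  "sign_cone T x = {v \<in> S2. \<forall>s\<in>T. 0 \<le> (\<nu> s \<bullet> v) * (\<nu> s \<bullet> x)}"

definition open_sign_cone :: "(real \<times> real) set \<Rightarrow> real^3 \<Rightarrow> (real^3) set" where
  "open_sign_cone T x = {v \<in> S2. \<forall>s\<in>T. 0 < (\<nu> s \<bullet> v) * (\<nu> s \<bullet> x)}"

definition sign_cell :: "(real \<times> real) set \<Rightarrow> real^3 \<Rightarrow> (real^3) set" where
  "sign_cell T x = sign_cone T x \<union> uminus ` sign_cone T x"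

lemma S2_iff: "v \<in> S2 \<longleftrightarrow> norm v = 1"
  by (simp add: S2_def)

lemma arr_complement_iff: "x \<in> arr_complement S \<longleftrightarrow> x \<in> S2 \<and> (\<forall>s\<in>S. \<nu> s \<bullet> x \<noteq> 0)"
  unfolding arr_complement_def dual_line_def by (auto simp: inner_commute[of x])

lemma sgn_in_S2: "z \<noteq> 0 \<Longrightarrow> sgn z \<in> S2"
  by (simp add: S2_iff norm_sgn)

lemma inner_sgn_mult_sign:
  fixes z :: "real^3"
  shows "0 \<le> (n \<bullet> sgn z) * y \<longleftrightarrow> 0 \<le> (n \<bullet> z) * y \<or> z = 0"
    and "0 < (n \<bullet> sgn z) * y \<longleftrightarrow> 0 < (n \<bullet> z) * y"
proof -
  have e: "(n \<bullet> sgn z) * y = inverse (norm z) * ((n \<bullet> z) * y)"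
    by (simp add: sgn_div_norm)
  show "0 \<le> (n \<bullet> sgn z) * y \<longleftrightarrow> 0 \<le> (n \<bullet> z) * y \<or> z = 0"
    unfolding e by (cases "z = 0") (simp_all add: zero_le_mult_iff)
  show "0 < (n \<bullet> sgn z) * y \<longleftrightarrow> 0 < (n \<bullet> z) * y"
    unfolding e by (cases "z = 0") (simp_all add: zero_less_mult_iff)
qed

lemma sgn_in_sign_cone_iff:
  "z \<noteq> 0 \<Longrightarrow> sgn z \<in> sign_cone T x \<longleftrightarrow> (\<forall>s\<in>T. 0 \<le> (\<nu> s \<bullet> z) * (\<nu> s \<bullet> x))"
  by (simp add: sign_cone_def sgn_in_S2 inner_sgn_mult_sign)

lemma sign_cone_antimono: "T \<subseteq> T' \<Longrightarrow> sign_cone T' x \<subseteq> sign_cone T x"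
  by (auto simp: sign_cone_def)

lemma sign_cone_scaleR: "0 < l \<Longrightarrow> sign_cone T (l *\<^sub>R x) = sign_cone T x"
  by (auto simp: sign_cone_def zero_le_mult_iff mult.left_commute[of _ l])

lemma uminus_sign_cone_iff: "- v \<in> sign_cone T x \<longleftrightarrow> v \<in> S2 \<and> (\<forall>s\<in>T. (\<nu> s \<bullet> v) * (\<nu> s \<bullet> x) \<le> 0)"
  by (auto simp: sign_cone_def S2_iff)

lemma sign_cell_iff:
  "v \<in> sign_cell T x \<longleftrightarrow> v \<in> sign_cone T x \<or> - v \<in> sign_cone T x"
  unfolding sign_cell_def by (metis UnCI UnE image_iff minus_minus)

lemma open_sign_cone_subset: "open_sign_cone S x \<subseteq> arr_complement S"
  by (force simp: open_sign_cone_def arr_complement_iff)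

text \<open>The open sign cone is the radial projection of an intersection of open half-spaces.\<close>

lemma connected_open_sign_cone:
  assumes "S \<noteq> {}"
  shows "connected (open_sign_cone S x)"
proof -
  define H where "H = (\<Inter>s\<in>S. {v. inner ((\<nu> s \<bullet> x) *\<^sub>R \<nu> s) v > 0})"
  have "convex H" unfolding H_def by (intro convex_INT ballI convex_halfspace_gt)
  have nonzero: "v \<noteq> 0" if "v \<in> H" for v
    using that assms by (auto simp: H_def)
  have "continuous_on H sgn"
    by (intro continuous_intros) (auto dest: nonzero)
  moreover have "sgn ` H = open_sign_cone S x"
  proof
    show "sgn ` H \<subseteq> open_sign_cone S x"
    proof
      fix w assume "w \<in> sgn ` H"
      then obtain v where v: "v \<in> H" "w = sgn v" by auto
      have "0 < (\<nu> s \<bullet> v) * (\<nu> s \<bullet> x)" if "s \<in> S" for s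
        using v that by (auto simp: H_def mult.commute)
      then show "w \<in> open_sign_cone S x"
        using nonzero[OF v(1)] by (simp add: v(2) open_sign_cone_def sgn_in_S2 inner_sgn_mult_sign)
    qed
    show "open_sign_cone S x \<subseteq> sgn ` H"
    proof
      fix w assume w: "w \<in> open_sign_cone S x"
      then have "sgn w = w" "w \<in> H"
        by (auto simp: open_sign_cone_def S2_iff sgn_div_norm H_def mult.commute)
      then show "w \<in> sgn ` H" by (metis image_eqI)
    qed
  qed
  ultimately show ?thesis
    using connected_continuous_image[OF _ convex_connected[OF \<open>convex H\<close>]] by metis
qed

lemma connected_component_arr_complement:
  assumes "S \<noteq> {}" and x: "x \<in> arr_complement S"
  shows "connected_component_set (arr_complement S) x = open_sign_cone S x"
proof
  have "x \<in> open_sign_cone S x"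
    using x by (simp add: arr_complement_iff open_sign_cone_def) (meson not_real_square_gt_zero)
  then show "open_sign_cone S x \<subseteq> connected_component_set (arr_complement S) x"
    by (rule connected_component_maximal[OF _ connected_open_sign_cone[OF assms(1)] open_sign_cone_subset])
next
  let ?C = "connected_component_set (arr_complement S) x"
  have C: "?C \<subseteq> arr_complement S" by (rule connected_component_subset)
  show "?C \<subseteq> open_sign_cone S x"
  proof
    fix v assume v: "v \<in> ?C"
    have vA: "v \<in> arr_complement S" using v C by blast
    have xC: "x \<in> ?C" using x by simp
    have "0 < (\<nu> s \<bullet> v) * (\<nu> s \<bullet> x)" if s: "s \<in> S" for s
    proof (rule ccontr)
      assume "\<not> ?thesis"
      moreover have "(\<nu> s \<bullet> v) * (\<nu> s \<bullet> x) \<noteq> 0"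
        using vA x s by (simp add: arr_complement_iff)
      ultimately have neg: "(\<nu> s \<bullet> v) * (\<nu> s \<bullet> x) < 0" by linarith
      have "\<exists>z\<in>?C. \<nu> s \<bullet> z = 0"
      proof (cases "\<nu> s \<bullet> v \<le> 0")
        case True
        then have "0 \<le> \<nu> s \<bullet> x" using neg by (auto simp: mult_less_0_iff)
        then show ?thesis
          using connected_ivt_hyperplane[OF connected_connected_component v xC, of "\<nu> s" 0] True by auto
      next
        case False
        then have "\<nu> s \<bullet> x \<le> 0" using neg by (auto simp: mult_less_0_iff)
        then show ?thesis
          using connected_ivt_hyperplane[OF connected_connected_component xC v, of "\<nu> s" 0] False by auto
      qed
      then show False using C s by (auto simp: arr_complement_iff)
    qed
    then show "v \<in> open_sign_cone S x"
      using v C by (auto simp: open_sign_cone_def arr_complement_iff)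
  qed
qed

lemma closed_sign_cone: "closed (sign_cone T x)"
proof -
  have "sign_cone T x = S2 \<inter> (\<Inter>s\<in>T. {v. inner ((\<nu> s \<bullet> x) *\<^sub>R \<nu> s) v \<ge> 0})"
    by (auto simp: sign_cone_def mult.commute)
  also have "closed \<dots>"
    unfolding S2_def by (intro closed_Int closed_INT closed_sphere ballI closed_halfspace_ge)
  finally show ?thesis .
qed

lemma sgn_shift_in_open_sign_cone:
  assumes x: "\<forall>s\<in>S. \<nu> s \<bullet> x \<noteq> 0" and v: "\<forall>s\<in>S. 0 \<le> (\<nu> s \<bullet> v) * (\<nu> s \<bullet> x)"
    and "0 < \<epsilon>" "v + \<epsilon> *\<^sub>R x \<noteq> 0"
  shows "sgn (v + \<epsilon> *\<^sub>R x) \<in> open_sign_cone S x"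
proof -
  have "0 < (\<nu> s \<bullet> (v + \<epsilon> *\<^sub>R x)) * (\<nu> s \<bullet> x)" if "s \<in> S" for s
  proof -
    have "0 < (\<nu> s \<bullet> x) * (\<nu> s \<bullet> x)" using x that by (metis not_real_square_gt_zero)
    moreover have "(\<nu> s \<bullet> (v + \<epsilon> *\<^sub>R x)) * (\<nu> s \<bullet> x)
        = (\<nu> s \<bullet> v) * (\<nu> s \<bullet> x) + \<epsilon> * ((\<nu> s \<bullet> x) * (\<nu> s \<bullet> x))"
      by (simp add: inner_add_right algebra_simps)
    ultimately show ?thesis using v that \<open>0 < \<epsilon>\<close> by (simp add: add_nonneg_pos)
  qed
  then show ?thesis
    using assms(4) by (simp add: open_sign_cone_def sgn_in_S2 inner_sgn_mult_sign)
qed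

lemma closure_open_sign_cone:
  assumes x: "x \<in> arr_complement S"
  shows "closure (open_sign_cone S x) = sign_cone S x"
proof
  show "closure (open_sign_cone S x) \<subseteq> sign_cone S x"
    by (rule closure_minimal[OF _ closed_sign_cone]) (auto simp: open_sign_cone_def sign_cone_def)
  show "sign_cone S x \<subseteq> closure (open_sign_cone S x)"
  proof
    fix v assume v: "v \<in> sign_cone S x"
    then have "v \<noteq> 0" "sgn v = v" by (auto simp: sign_cone_def S2_iff sgn_div_norm)
    have "((\<lambda>\<epsilon>. v + \<epsilon> *\<^sub>R x) \<longlongrightarrow> v + 0 *\<^sub>R x) (at_right 0)"
      by (intro tendsto_intros)
    then have shift: "((\<lambda>\<epsilon>. v + \<epsilon> *\<^sub>R x) \<longlongrightarrow> v) (at_right 0)" by simp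
    then have "((\<lambda>\<epsilon>. sgn (v + \<epsilon> *\<^sub>R x)) \<longlongrightarrow> v) (at_right 0)"
      using tendsto_sgn[OF shift \<open>v \<noteq> 0\<close>] \<open>sgn v = v\<close> by simp
    moreover have "\<forall>\<^sub>F \<epsilon> in at_right 0. sgn (v + \<epsilon> *\<^sub>R x) \<in> closure (open_sign_cone S x)"
      using eventually_conj[OF eventually_at_right_less tendsto_imp_eventually_ne[OF shift \<open>v \<noteq> 0\<close>]]
    proof (rule eventually_mono)
      fix \<epsilon> :: real assume "0 < \<epsilon> \<and> v + \<epsilon> *\<^sub>R x \<noteq> 0"
      then show "sgn (v + \<epsilon> *\<^sub>R x) \<in> closure (open_sign_cone S x)"
        using sgn_shift_in_open_sign_cone[of S x v \<epsilon>] x v closure_subset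
        by (auto simp: arr_complement_iff sign_cone_def)
    qed
    ultimately show "v \<in> closure (open_sign_cone S x)"
      by (intro Lim_in_closed_set[OF closed_closure]) auto
  qed
qed

lemma is_cell_iff:
  assumes "S \<noteq> {}"
  shows "is_cell S D \<longleftrightarrow> (\<exists>x\<in>arr_complement S. D = sign_cell S x)"
  unfolding is_cell_def sign_cell_def
  by (intro bex_cong refl) (simp add: connected_component_arr_complement[OF assms] closure_open_sign_cone)

section \<open>Dual normals and vertices\<close>

lemma inner_cross_dual_normal: "cross3 (\<nu> s) (\<nu> t) \<bullet> \<nu> r = - orient s t r"
  by (simp add: cross3_simps dual_normal_def orient_def)

lemma dual_normal_nonzero: "\<nu> s \<noteq> 0"
proof
  assume "\<nu> s = 0"
  then have "\<nu> s $ 2 = 0" by simp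
  then show False by (simp add: dual_normal_def)
qed

lemma cross_dual_normal_nonzero:
  assumes "s \<noteq> t"
  shows "cross3 (\<nu> s) (\<nu> t) \<noteq> 0"
proof
  assume h: "cross3 (\<nu> s) (\<nu> t) = 0"
  then have "cross3 (\<nu> s) (\<nu> t) $ 1 = 0" "cross3 (\<nu> s) (\<nu> t) $ 3 = 0" by simp_all
  then have "fst s = fst t" "snd s = snd t"
    by (simp_all add: cross_components dual_normal_def)
  with assms show False by (simp add: prod_eq_iff)
qed

lemma orthogonal_dual_normals_parallel:
  assumes "\<nu> s \<bullet> v = 0" "\<nu> t \<bullet> v = 0"
  shows "(cross3 (\<nu> s) (\<nu> t) \<bullet> cross3 (\<nu> s) (\<nu> t)) *\<^sub>R v
           = (v \<bullet> cross3 (\<nu> s) (\<nu> t)) *\<^sub>R cross3 (\<nu> s) (\<nu> t)"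
proof -
  let ?u = "cross3 (\<nu> s) (\<nu> t)"
  have "cross3 v ?u = 0" using assms by (simp add: Lagrange inner_commute)
  then have "cross3 ?u v = 0" by (metis cross_skew neg_equal_0_iff_equal)
  then have "cross3 ?u (cross3 ?u v) = 0" by simp
  then show ?thesis by (simp add: Lagrange inner_commute)
qed

lemma dual_lines_not_concurrent:
  assumes "orient s t r \<noteq> 0" and "z \<noteq> 0" "\<nu> s \<bullet> z = 0" "\<nu> t \<bullet> z = 0"
  shows "\<nu> r \<bullet> z \<noteq> 0"
proof
  assume zr: "\<nu> r \<bullet> z = 0"
  let ?u = "cross3 (\<nu> s) (\<nu> t)"
  have e: "(?u \<bullet> ?u) *\<^sub>R z = (z \<bullet> ?u) *\<^sub>R ?u"
    by (rule orthogonal_dual_normals_parallel[OF assms(3,4)])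
  have "s \<noteq> t" using assms(1) by (auto simp: orient_def)
  then have "?u \<bullet> ?u \<noteq> 0" using cross_dual_normal_nonzero by simp
  then have zu: "z \<bullet> ?u \<noteq> 0" using e \<open>z \<noteq> 0\<close> by auto
  have "(z \<bullet> ?u) * (\<nu> r \<bullet> ?u) = 0"
    using arg_cong[OF e, of "inner (\<nu> r)"] zr by simp
  then have "?u \<bullet> \<nu> r = 0" using zu by (simp add: inner_commute)
  with assms(1) show False by (simp add: inner_cross_dual_normal)
qed

lemma general_position_orient:
  "general_position S \<Longrightarrow> s \<in> S \<Longrightarrow> t \<in> S \<Longrightarrow> r \<in> S \<Longrightarrow> s \<noteq> t \<Longrightarrow> s \<noteq> r \<Longrightarrow> t \<noteq> r
    \<Longrightarrow> orient s t r \<noteq> 0"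
  by (simp add: general_position_def)

lemma general_position_subset: "general_position S \<Longrightarrow> T \<subseteq> S \<Longrightarrow> general_position T"
  unfolding general_position_def by blast

lemma dual_line_iff: "w \<in> dual_line s \<longleftrightarrow> w \<in> S2 \<and> \<nu> s \<bullet> w = 0"
  by (simp add: dual_line_def inner_commute)

lemma uminus_dual_line_iff: "- w \<in> dual_line s \<longleftrightarrow> w \<in> dual_line s"
  by (simp add: dual_line_iff S2_iff)

lemma meet_eq_sgn: "meet a b = sgn (cross3 (\<nu> a) (\<nu> b))"
  by (simp add: meet_def sgn_div_norm divide_inverse_commute)

lemma meet_on_dual_lines:
  assumes "a \<noteq> b"
  shows "meet a b \<in> dual_line a" "meet a b \<in> dual_line b"
  using sgn_in_S2[OF cross_dual_normal_nonzero[OF assms]]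
  by (simp_all add: dual_line_iff meet_eq_sgn sgn_div_norm dot_cross_self)

lemma meet_not_on_dual_line:
  assumes "orient a b c \<noteq> 0"
  shows "meet a b \<notin> dual_line c"
proof -
  have "a \<noteq> b" using assms by (auto simp: orient_def)
  then have "norm (cross3 (\<nu> a) (\<nu> b)) \<noteq> 0" using cross_dual_normal_nonzero by simp
  then show ?thesis
    using assms inner_cross_dual_normal[of a b c]
    by (simp add: dual_line_def meet_eq_sgn sgn_div_norm)
qed

lemma meet_unique:
  assumes "a \<noteq> b" and "w \<in> dual_line a" "w \<in> dual_line b"
  shows "w = meet a b \<or> w = - meet a b"
proof -
  let ?u = "cross3 (\<nu> a) (\<nu> b)"
  define k where "k = (w \<bullet> ?u) / (?u \<bullet> ?u)"
  have w: "norm w = 1" "\<nu> a \<bullet> w = 0" "\<nu> b \<bullet> w = 0"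
    using assms(2,3) by (simp_all add: dual_line_iff S2_iff)
  have "?u \<bullet> ?u \<noteq> 0" using cross_dual_normal_nonzero[OF assms(1)] by simp
  then have "w = inverse (?u \<bullet> ?u) *\<^sub>R ((?u \<bullet> ?u) *\<^sub>R w)" by simp
  also have "\<dots> = k *\<^sub>R ?u"
    by (simp add: orthogonal_dual_normals_parallel[OF w(2,3)] k_def divide_inverse_commute)
  finally have wk: "w = k *\<^sub>R ?u" .
  then have "k \<noteq> 0" using w(1) by auto
  then have "sgn k = 1 \<or> sgn k = -1" by (simp add: sgn_real_def)
  moreover have "w = sgn w" using w(1) by (simp add: sgn_div_norm)
  then have "w = sgn k *\<^sub>R meet a b" using wk by (simp add: sgn_scaleR meet_eq_sgn)
  ultimately show ?thesis by auto
qed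

section \<open>Sides of a cell\<close>

text \<open>A direction in which z can be moved inside the dual line of s0 without leaving
  the closed cone: if z lies on a second line s1, move along s0 towards the side of s1
  containing x; otherwise any direction will do.\<close>

lemma facet_tangent_direction:
  assumes gp: "general_position S" and x: "\<forall>s\<in>S. \<nu> s \<bullet> x \<noteq> 0"
    and z: "z \<noteq> 0" and s0: "s0 \<in> S" "\<nu> s0 \<bullet> z = 0"
  obtains d where "d \<noteq> 0" "z \<bullet> d = 0" "\<nu> s0 \<bullet> d = 0"
    "\<forall>s\<in>S. \<nu> s \<bullet> z = 0 \<longrightarrow> 0 \<le> (\<nu> s \<bullet> d) * (\<nu> s \<bullet> x)"
proof (cases "\<exists>s1\<in>S. s1 \<noteq> s0 \<and> \<nu> s1 \<bullet> z = 0")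
  case True
  then obtain s1 where s1: "s1 \<in> S" "s1 \<noteq> s0" "\<nu> s1 \<bullet> z = 0" by auto
  let ?n0 = "\<nu> s0" and ?n1 = "\<nu> s1"
  define d where "d = sgn (?n1 \<bullet> x) *\<^sub>R ((?n0 \<bullet> ?n0) *\<^sub>R ?n1 - (?n0 \<bullet> ?n1) *\<^sub>R ?n0)"
  have "z \<bullet> d = 0" "?n0 \<bullet> d = 0"
    using s0(2) s1(3) by (simp_all add: d_def inner_diff_right inner_commute)
  have "0 < (norm (cross3 ?n0 ?n1))\<^sup>2"
    using cross_dual_normal_nonzero s1(2) by simp
  then have "0 < (norm ?n0)\<^sup>2 * (norm ?n1)\<^sup>2 - (?n0 \<bullet> ?n1)\<^sup>2"
    by (simp only: norm_cross)
  also have "\<dots> = (?n0 \<bullet> ?n0) * (?n1 \<bullet> ?n1) - (?n0 \<bullet> ?n1) * (?n0 \<bullet> ?n1)"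
    by (simp only: power2_norm_eq_inner) (simp only: power2_eq_square)
  finally have gram: "0 < (?n0 \<bullet> ?n0) * (?n1 \<bullet> ?n1) - (?n0 \<bullet> ?n1) * (?n0 \<bullet> ?n1)" .
  have "(?n1 \<bullet> d) * (?n1 \<bullet> x)
        = ((?n0 \<bullet> ?n0) * (?n1 \<bullet> ?n1) - (?n0 \<bullet> ?n1) * (?n0 \<bullet> ?n1)) * \<bar>?n1 \<bullet> x\<bar>"
    by (simp add: d_def inner_diff_right inner_commute algebra_simps abs_sgn)
  also have "\<dots> > 0" using gram x s1(1) by simp
  finally have d1: "0 < (?n1 \<bullet> d) * (?n1 \<bullet> x)" .
  have "s = s0 \<or> s = s1" if "s \<in> S" "\<nu> s \<bullet> z = 0" for s
    using dual_lines_not_concurrent[OF general_position_orient[OF gp s0(1) s1(1) that(1)] z s0(2) s1(3)]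
      that s1(2) by blast
  then have "\<forall>s\<in>S. \<nu> s \<bullet> z = 0 \<longrightarrow> 0 \<le> (\<nu> s \<bullet> d) * (\<nu> s \<bullet> x)"
    using \<open>?n0 \<bullet> d = 0\<close> d1 by fastforce
  moreover have "d \<noteq> 0" using d1 by auto
  ultimately show ?thesis using that \<open>z \<bullet> d = 0\<close> \<open>?n0 \<bullet> d = 0\<close> by blast
next
  case False
  define d where "d = cross3 z (\<nu> s0)"
  have d: "z \<bullet> d = 0" "\<nu> s0 \<bullet> d = 0" by (simp_all add: d_def dot_cross_self)
  have "(norm d)\<^sup>2 = (norm z)\<^sup>2 * (norm (\<nu> s0))\<^sup>2"
    using s0(2) by (simp add: d_def norm_cross inner_commute)
  then have "d \<noteq> 0" using z dual_normal_nonzero[of s0] by auto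
  moreover have "\<forall>s\<in>S. \<nu> s \<bullet> z = 0 \<longrightarrow> 0 \<le> (\<nu> s \<bullet> d) * (\<nu> s \<bullet> x)"
    using False d by auto
  ultimately show ?thesis using that d by blast
qed

lemma inj_sgn_ray:
  fixes z d :: "real^3"
  assumes "z \<noteq> 0" "z \<bullet> d = 0" "d \<noteq> 0"
  shows "inj (\<lambda>\<epsilon>. sgn (z + \<epsilon> *\<^sub>R d))"
proof (rule injI)
  fix e1 e2 :: real
  assume eq: "sgn (z + e1 *\<^sub>R d) = sgn (z + e2 *\<^sub>R d)"
  have zz: "z \<bullet> (z + e *\<^sub>R d) = z \<bullet> z" for e using assms(2) by (simp add: inner_add_right)
  then have nz: "z + e *\<^sub>R d \<noteq> 0" for e using assms(1) by (metis inner_zero_right inner_eq_zero_iff)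
  have "inverse (norm (z + e1 *\<^sub>R d)) * (z \<bullet> z) = inverse (norm (z + e2 *\<^sub>R d)) * (z \<bullet> z)"
    using arg_cong[OF eq, of "inner z"] by (simp add: sgn_div_norm zz)
  then have "norm (z + e1 *\<^sub>R d) = norm (z + e2 *\<^sub>R d)" using assms(1) by simp
  then have "z + e1 *\<^sub>R d = z + e2 *\<^sub>R d" using eq nz by (simp add: sgn_div_norm)
  then show "e1 = e2" using assms(3) by (simp add: scaleR_cancel_right)
qed

lemma eventually_sign_cone_along_ray:
  assumes fin: "finite S" and x: "\<forall>s\<in>S. \<nu> s \<bullet> x \<noteq> 0"
    and cone: "\<forall>s\<in>S. 0 \<le> (\<nu> s \<bullet> z) * (\<nu> s \<bullet> x)"
    and tangent: "\<forall>s\<in>S. \<nu> s \<bullet> z = 0 \<longrightarrow> 0 \<le> (\<nu> s \<bullet> d) * (\<nu> s \<bullet> x)"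
  shows "\<forall>\<^sub>F \<epsilon> in at_right 0. \<forall>s\<in>S. 0 \<le> (\<nu> s \<bullet> (z + \<epsilon> *\<^sub>R d)) * (\<nu> s \<bullet> x)"
proof (rule eventually_ball_finite[OF fin], intro ballI)
  fix s assume s: "s \<in> S"
  have eq: "(\<nu> s \<bullet> (z + \<epsilon> *\<^sub>R d)) * (\<nu> s \<bullet> x)
            = (\<nu> s \<bullet> z) * (\<nu> s \<bullet> x) + \<epsilon> * ((\<nu> s \<bullet> d) * (\<nu> s \<bullet> x))" for \<epsilon>
    by (simp add: inner_add_right algebra_simps)
  show "\<forall>\<^sub>F \<epsilon> in at_right 0. 0 \<le> (\<nu> s \<bullet> (z + \<epsilon> *\<^sub>R d)) * (\<nu> s \<bullet> x)"
  proof (cases "\<nu> s \<bullet> z = 0")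
    case True
    then show ?thesis using tangent s eventually_at_right_less[of 0]
      unfolding eq by (auto elim!: eventually_mono)
  next
    case False
    then have "0 < (\<nu> s \<bullet> z) * (\<nu> s \<bullet> x)" using cone s x
      by (metis less_eq_real_def mult_eq_0_iff)
    moreover have "((\<lambda>\<epsilon>. (\<nu> s \<bullet> z) * (\<nu> s \<bullet> x) + \<epsilon> * ((\<nu> s \<bullet> d) * (\<nu> s \<bullet> x)))
        \<longlongrightarrow> (\<nu> s \<bullet> z) * (\<nu> s \<bullet> x) + 0 * ((\<nu> s \<bullet> d) * (\<nu> s \<bullet> x))) (at_right 0)"
      by (intro tendsto_intros)
    ultimately show ?thesis
      unfolding eq by (auto dest: order_tendstoD(1) elim!: eventually_mono)
  qed
qed

text \<open>A nonzero point of the closed cone on a dual line spans, together with a tangent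
  direction, a whole arc of the cell on that line.\<close>

lemma infinite_sign_cone_facet:
  assumes fin: "finite S" and gp: "general_position S" and x: "\<forall>s\<in>S. \<nu> s \<bullet> x \<noteq> 0"
    and z: "z \<noteq> 0" and cone: "\<forall>s\<in>S. 0 \<le> (\<nu> s \<bullet> z) * (\<nu> s \<bullet> x)"
    and s0: "s0 \<in> S" "\<nu> s0 \<bullet> z = 0"
  shows "infinite (sign_cone S x \<inter> dual_line s0)"
proof -
  obtain d where d: "d \<noteq> 0" "z \<bullet> d = 0" "\<nu> s0 \<bullet> d = 0"
    and tangent: "\<forall>s\<in>S. \<nu> s \<bullet> z = 0 \<longrightarrow> 0 \<le> (\<nu> s \<bullet> d) * (\<nu> s \<bullet> x)"
    using facet_tangent_direction[OF gp x z s0] .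
  obtain b where "b > 0"
    and b: "\<And>\<epsilon>. 0 < \<epsilon> \<Longrightarrow> \<epsilon> < b \<Longrightarrow> \<forall>s\<in>S. 0 \<le> (\<nu> s \<bullet> (z + \<epsilon> *\<^sub>R d)) * (\<nu> s \<bullet> x)"
    using eventually_sign_cone_along_ray[OF fin x cone tangent]
    unfolding eventually_at_right_field by auto
  have nz: "z + \<epsilon> *\<^sub>R d \<noteq> 0" for \<epsilon>
  proof
    assume "z + \<epsilon> *\<^sub>R d = 0"
    then have "z \<bullet> (z + \<epsilon> *\<^sub>R d) = 0" by simp
    then show False using z d(2) by (simp add: inner_add_right)
  qed
  have "(\<lambda>\<epsilon>. sgn (z + \<epsilon> *\<^sub>R d)) ` {0<..<b} \<subseteq> sign_cone S x \<inter> dual_line s0"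
  proof
    fix y assume "y \<in> (\<lambda>\<epsilon>. sgn (z + \<epsilon> *\<^sub>R d)) ` {0<..<b}"
    then obtain \<epsilon> where "0 < \<epsilon>" "\<epsilon> < b" and y: "y = sgn (z + \<epsilon> *\<^sub>R d)" by auto
    have "y \<in> sign_cone S x"
      using b[OF \<open>0 < \<epsilon>\<close> \<open>\<epsilon> < b\<close>] nz by (simp add: y sgn_in_sign_cone_iff)
    moreover have "y \<in> dual_line s0"
      using s0(2) d(3) sgn_in_S2[OF nz] by (simp add: y dual_line_iff sgn_div_norm inner_add_right)
    ultimately show "y \<in> sign_cone S x \<inter> dual_line s0" by blast
  qed
  moreover have "infinite ((\<lambda>\<epsilon>. sgn (z + \<epsilon> *\<^sub>R d)) ` {0<..<b})"
    using inj_sgn_ray[OF z d(2,1)] \<open>b > 0\<close>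
    by (simp add: finite_image_iff inj_on_subset[of _ UNIV])
  ultimately show ?thesis using infinite_super by blast
qed

lemma bounding_lines_sign_cell:
  "bounding_lines S (sign_cell T x) = {s\<in>S. infinite (sign_cone T x \<inter> dual_line s)}"
proof -
  have "uminus ` sign_cone T x \<inter> dual_line s = uminus ` (sign_cone T x \<inter> dual_line s)" for s
    by (auto simp: uminus_dual_line_iff image_iff)
  then show ?thesis
    by (auto simp: bounding_lines_def sign_cell_def Int_Un_distrib2 finite_image_iff)
qed

text \<open>X / (X - Y) is where (1 - t) X + t Y changes sign.\<close>

lemma linear_sign_change:
  fixes X Y :: real
  assumes "X * Y < 0"
  shows "0 < X / (X - Y)" "X / (X - Y) < 1" "0 < X * (X - Y)"
    "X * X = X / (X - Y) * (X * (X - Y))"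
proof -
  have "0 \<le> X * X" "0 \<le> Y * Y" by simp_all
  moreover have "X * (X - Y) = X * X - X * Y" "(- Y) * (X - Y) = Y * Y - X * Y"
    by (simp_all add: algebra_simps)
  ultimately have p: "0 < X * (X - Y)" and q: "0 < (- Y) * (X - Y)"
    using assms by linarith+
  then have "X - Y \<noteq> 0" by auto
  then have "1 - X / (X - Y) = (- Y) / (X - Y)" "X * X = X / (X - Y) * (X * (X - Y))"
    by (simp_all add: field_simps)
  moreover have "0 < (- Y) / (X - Y)" "0 < X / (X - Y)"
    using p q by (simp_all only: zero_less_divide_iff zero_less_mult_iff)
  ultimately show "0 < X / (X - Y)" "X / (X - Y) < 1" "0 < X * (X - Y)"
    "X * X = X / (X - Y) * (X * (X - Y))"
    using p by simp_all
qed

text \<open>Walking from x towards a point v of a larger cone, the first constraint of S to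
  become tight is met at a nonzero point z of the closed cone.\<close>

lemma sign_cone_exit_point:
  assumes fin: "finite S" and T: "T \<subseteq> S" "a \<in> T" and x: "\<forall>s\<in>S. \<nu> s \<bullet> x \<noteq> 0"
    and v: "v \<in> sign_cone T x" "v \<notin> sign_cone S x"
  obtains z s0 where "z \<noteq> 0" "s0 \<in> S - T" "\<nu> s0 \<bullet> z = 0"
    "\<forall>s\<in>S. 0 \<le> (\<nu> s \<bullet> z) * (\<nu> s \<bullet> x)"
proof -
  define V where "V = {s\<in>S. (\<nu> s \<bullet> x) * (\<nu> s \<bullet> v) < 0}"
  define \<tau> where "\<tau> s = (\<nu> s \<bullet> x) / ((\<nu> s \<bullet> x) - (\<nu> s \<bullet> v))" for s
  have "V \<noteq> {}" "finite V" "V \<subseteq> S - T"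
    using v fin by (auto simp: V_def sign_cone_def not_le mult.commute)
  have \<tau>: "0 < \<tau> s" "\<tau> s < 1" "0 < (\<nu> s \<bullet> x) * ((\<nu> s \<bullet> x) - (\<nu> s \<bullet> v))"
    and tight: "(\<nu> s \<bullet> x) * (\<nu> s \<bullet> x) = \<tau> s * ((\<nu> s \<bullet> x) * ((\<nu> s \<bullet> x) - (\<nu> s \<bullet> v)))"
    if "s \<in> V" for s
    using linear_sign_change[of "\<nu> s \<bullet> x" "\<nu> s \<bullet> v"] that by (simp_all add: V_def \<tau>_def)
  define t0 where "t0 = Min (\<tau> ` V)"
  have "t0 \<in> \<tau> ` V"
    unfolding t0_def using \<open>V \<noteq> {}\<close> \<open>finite V\<close> by (intro Min_in) auto
  then obtain s0 where s0: "s0 \<in> V" "\<tau> s0 = t0" by auto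
  have t0_le: "t0 \<le> \<tau> s" if "s \<in> V" for s
    using \<open>finite V\<close> that by (simp add: t0_def)
  have t0: "0 < t0" "t0 < 1" using \<tau>[OF s0(1)] s0(2) by auto
  define z where "z = (1 - t0) *\<^sub>R x + t0 *\<^sub>R v"
  have z_expand: "(\<nu> s \<bullet> z) * (\<nu> s \<bullet> x)
      = (\<nu> s \<bullet> x) * (\<nu> s \<bullet> x) - t0 * ((\<nu> s \<bullet> x) * ((\<nu> s \<bullet> x) - (\<nu> s \<bullet> v)))" for s
    by (simp add: z_def inner_add_right algebra_simps)
  have z_convex: "(\<nu> s \<bullet> z) * (\<nu> s \<bullet> x)
      = (1 - t0) * ((\<nu> s \<bullet> x) * (\<nu> s \<bullet> x)) + t0 * ((\<nu> s \<bullet> v) * (\<nu> s \<bullet> x))" for s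
    by (simp add: z_def inner_add_right algebra_simps)
  have cone: "\<forall>s\<in>S. 0 \<le> (\<nu> s \<bullet> z) * (\<nu> s \<bullet> x)"
  proof
    fix s assume "s \<in> S"
    show "0 \<le> (\<nu> s \<bullet> z) * (\<nu> s \<bullet> x)"
    proof (cases "s \<in> V")
      case True
      then show ?thesis
        unfolding z_expand tight[OF True] using t0_le[OF True] \<tau>(3)[OF True]
        by (simp add: mult_right_mono)
    next
      case False
      then have "0 \<le> (\<nu> s \<bullet> v) * (\<nu> s \<bullet> x)" using \<open>s \<in> S\<close> by (auto simp: V_def mult.commute)
      then show ?thesis using t0 unfolding z_convex by (simp add: add_nonneg_nonneg)
    qed
  qed
  have "\<nu> s0 \<bullet> z = 0"
  proof -
    have "(\<nu> s0 \<bullet> z) * (\<nu> s0 \<bullet> x) = 0"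
      unfolding z_expand tight[OF s0(1)] s0(2) by simp
    then show ?thesis using x s0(1) by (auto simp: V_def)
  qed
  moreover have "z \<noteq> 0"
  proof
    assume "z = 0"
    have "\<nu> a \<bullet> x \<noteq> 0" using x T by auto
    then have "0 < (\<nu> a \<bullet> x) * (\<nu> a \<bullet> x)" by (metis not_real_square_gt_zero)
    moreover have "0 \<le> (\<nu> a \<bullet> v) * (\<nu> a \<bullet> x)"
      using v(1) T by (auto simp: sign_cone_def)
    ultimately have "0 < (\<nu> a \<bullet> z) * (\<nu> a \<bullet> x)"
      using t0 unfolding z_convex by (simp add: add_pos_nonneg)
    with \<open>z = 0\<close> show False by simp
  qed
  ultimately show ?thesis using that cone s0(1) \<open>V \<subseteq> S - T\<close> by blast
qed

lemma sign_cone_eq_if_finite_facets: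
  assumes fin: "finite S" and gp: "general_position S" and x: "\<forall>s\<in>S. \<nu> s \<bullet> x \<noteq> 0"
    and T: "T \<subseteq> S" "T \<noteq> {}"
    and facets: "\<forall>s\<in>S - T. finite (sign_cone S x \<inter> dual_line s)"
  shows "sign_cone S x = sign_cone T x"
proof
  show "sign_cone S x \<subseteq> sign_cone T x" using T(1) by (rule sign_cone_antimono)
  show "sign_cone T x \<subseteq> sign_cone S x"
  proof (rule ccontr)
    assume "\<not> ?thesis"
    then obtain v where "v \<in> sign_cone T x" "v \<notin> sign_cone S x" by blast
    moreover obtain a where "a \<in> T" using T(2) by blast
    ultimately obtain z s0 where "z \<noteq> 0" "s0 \<in> S - T" "\<nu> s0 \<bullet> z = 0"
      "\<forall>s\<in>S. 0 \<le> (\<nu> s \<bullet> z) * (\<nu> s \<bullet> x)"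
      using sign_cone_exit_point[OF fin T(1) _ x] by metis
    then have "infinite (sign_cone S x \<inter> dual_line s0)"
      using infinite_sign_cone_facet[OF fin gp x] by blast
    with facets \<open>s0 \<in> S - T\<close> show False by blast
  qed
qed

section \<open>Orientation of the sides at a vertex\<close>

lemma inner_move_along:
  "n \<bullet> move_along s w \<tau> = cos \<tau> * (n \<bullet> w) + sin \<tau> / norm (\<nu> s) * (n \<bullet> cross3 w (\<nu> s))"
  by (simp add: move_along_def inner_add_right)

lemma move_along_in_dual_line:
  assumes "w \<in> dual_line s"
  shows "move_along s w \<tau> \<in> dual_line s"
proof -
  let ?n = "\<nu> s"
  have w: "w \<bullet> w = 1" "?n \<bullet> w = 0" using assms by (simp_all add: dual_line_iff S2_iff norm_eq_1)
  have "norm ?n \<noteq> 0" using dual_normal_nonzero by simp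
  moreover have "cross3 w ?n \<bullet> cross3 w ?n = (norm ?n)\<^sup>2"
    using norm_cross[of w ?n] w by (simp add: power2_norm_eq_inner inner_commute)
  ultimately have "move_along s w \<tau> \<bullet> move_along s w \<tau> = (cos \<tau>)\<^sup>2 + (sin \<tau>)\<^sup>2"
    using w by (simp add: move_along_def inner_add_left inner_add_right dot_cross_self inner_commute
        power2_eq_square algebra_simps)
  then show ?thesis
    using w by (simp add: dual_line_iff S2_iff norm_eq_1 inner_move_along dot_cross_self)
qed

lemma sin_mult_nonneg_at_right_iff:
  fixes \<beta> :: "real \<Rightarrow> real"
  assumes "isCont \<beta> 0" "\<beta> 0 \<noteq> 0" "C \<noteq> 0"
  shows "(\<exists>e>0. \<forall>\<tau>. 0 < \<tau> \<and> \<tau> < e \<longrightarrow> 0 \<le> sin \<tau> * (\<beta> \<tau> * C)) \<longleftrightarrow> 0 < \<beta> 0 * C"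
proof -
  have at_right_iff: "(\<exists>e>0. \<forall>\<tau>. 0 < \<tau> \<and> \<tau> < e \<longrightarrow> P \<tau>) \<longleftrightarrow> eventually P (at_right 0)"
    for P :: "real \<Rightarrow> bool"
    by (auto simp: eventually_at_right_field)
  have "eventually (\<lambda>\<tau>. 0 < sin \<tau>) (at_right (0::real))"
    unfolding eventually_at_right_field by (auto intro!: exI[of _ pi] sin_gt_zero)
  moreover have "eventually (\<lambda>\<tau>. 0 < (\<beta> \<tau> * C) * (\<beta> 0 * C)) (at_right 0)"
  proof (rule order_tendstoD(1))
    show "((\<lambda>\<tau>. (\<beta> \<tau> * C) * (\<beta> 0 * C)) \<longlongrightarrow> (\<beta> 0 * C) * (\<beta> 0 * C)) (at_right 0)"
      using assms(1) by (intro tendsto_intros) (simp add: isCont_def filterlim_at_split)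
    show "0 < (\<beta> 0 * C) * (\<beta> 0 * C)"
      using assms(2,3) by (metis mult_eq_0_iff not_real_square_gt_zero)
  qed
  ultimately have ev: "eventually (\<lambda>\<tau>. 0 < sin \<tau> \<and> 0 < (\<beta> \<tau> * C) * (\<beta> 0 * C)) (at_right 0)"
    by (rule eventually_conj)
  have "eventually (\<lambda>\<tau>. 0 \<le> sin \<tau> * (\<beta> \<tau> * C)) (at_right 0) \<longleftrightarrow> 0 < \<beta> 0 * C"
  proof
    assume nonneg: "eventually (\<lambda>\<tau>. 0 \<le> sin \<tau> * (\<beta> \<tau> * C)) (at_right 0)"
    have sign: "0 < b" if "0 < c" "0 \<le> c * a" "0 < a * b" for a b c :: real
      using that by (auto simp: zero_le_mult_iff zero_less_mult_iff)
    have "eventually (\<lambda>\<tau>. 0 < \<beta> 0 * C) (at_right (0::real))"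
      using eventually_conj[OF ev nonneg] by (rule eventually_mono) (use sign in blast)
    then show "0 < \<beta> 0 * C" by simp
  next
    assume "0 < \<beta> 0 * C"
    moreover have "0 \<le> c * a" if "0 < c" "0 < a * b" "0 < b" for a b c :: real
      using that by (auto simp: zero_less_mult_iff)
    ultimately show "eventually (\<lambda>\<tau>. 0 \<le> sin \<tau> * (\<beta> \<tau> * C)) (at_right 0)"
      using ev by (auto elim: eventually_mono)
  qed
  then show ?thesis by (simp only: at_right_iff)
qed

lemma move_along_in_sign_cell_iff:
  assumes w: "w \<in> dual_line s" "\<nu> t \<bullet> w = 0"
  shows "move_along s w \<tau> \<in> sign_cell {s, t, r} x \<longleftrightarrow>
    0 \<le> sin \<tau> * ((\<nu> r \<bullet> move_along s w \<tau>)
                  * ((\<nu> t \<bullet> cross3 w (\<nu> s)) / norm (\<nu> s) * (\<nu> t \<bullet> x) * (\<nu> r \<bullet> x)))"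
proof -
  let ?m = "move_along s w \<tau>" and ?k = "(\<nu> t \<bullet> cross3 w (\<nu> s)) / norm (\<nu> s)"
  have m: "?m \<in> S2" "\<nu> s \<bullet> ?m = 0"
    using move_along_in_dual_line[OF w(1)] by (simp_all add: dual_line_iff)
  have tm: "\<nu> t \<bullet> ?m = sin \<tau> * ?k" using w(2) by (simp add: inner_move_along)
  define A where "A = (\<nu> t \<bullet> ?m) * (\<nu> t \<bullet> x)"
  define B where "B = (\<nu> r \<bullet> ?m) * (\<nu> r \<bullet> x)"
  have "?m \<in> sign_cell {s, t, r} x \<longleftrightarrow> (0 \<le> A \<and> 0 \<le> B) \<or> (A \<le> 0 \<and> B \<le> 0)"
    using m by (auto simp: sign_cell_iff sign_cone_def uminus_sign_cone_iff S2_iff A_def[symmetric] B_def[symmetric])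
  also have "\<dots> \<longleftrightarrow> 0 \<le> A * B" by (simp only: zero_le_mult_iff)
  finally show ?thesis unfolding A_def B_def tm by (simp only: ac_simps)
qed

lemma side_directions_at_vertex:
  assumes w: "w \<in> dual_line s" "\<nu> t \<bullet> w = 0"
    and nz: "\<nu> t \<bullet> cross3 w (\<nu> s) \<noteq> 0" "\<nu> r \<bullet> w \<noteq> 0" "\<nu> t \<bullet> x \<noteq> 0" "\<nu> r \<bullet> x \<noteq> 0"
    and D: "D = sign_cell {s, t, r} x"
  shows "(\<exists>e>0. \<forall>\<tau>. 0 < \<tau> \<and> \<tau> < e \<longrightarrow> move_along s w \<tau> \<in> D)
           \<longleftrightarrow> 0 < (\<nu> t \<bullet> cross3 w (\<nu> s)) * (\<nu> t \<bullet> x) * (\<nu> r \<bullet> w) * (\<nu> r \<bullet> x)"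
    and "(\<exists>e>0. \<forall>\<tau>. 0 < \<tau> \<and> \<tau> < e \<longrightarrow> move_along s w (- \<tau>) \<in> D)
           \<longleftrightarrow> (\<nu> t \<bullet> cross3 w (\<nu> s)) * (\<nu> t \<bullet> x) * (\<nu> r \<bullet> w) * (\<nu> r \<bullet> x) < 0"
proof -
  define C where "C = (\<nu> t \<bullet> cross3 w (\<nu> s)) / norm (\<nu> s) * (\<nu> t \<bullet> x) * (\<nu> r \<bullet> x)"
  have "0 < norm (\<nu> s)" using dual_normal_nonzero by simp
  then have C: "C \<noteq> 0"
    and sign_C: "0 < (\<nu> r \<bullet> w) * C \<longleftrightarrow> 0 < (\<nu> t \<bullet> cross3 w (\<nu> s)) * (\<nu> t \<bullet> x) * (\<nu> r \<bullet> w) * (\<nu> r \<bullet> x)"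
        "0 < (\<nu> r \<bullet> w) * - C \<longleftrightarrow> (\<nu> t \<bullet> cross3 w (\<nu> s)) * (\<nu> t \<bullet> x) * (\<nu> r \<bullet> w) * (\<nu> r \<bullet> x) < 0"
    using nz by (auto simp: C_def zero_less_divide_iff divide_less_0_iff ac_simps)
  have neg_C: "- C \<noteq> 0" using C by simp
  have cont: "isCont (\<lambda>\<tau>. \<nu> r \<bullet> move_along s w (c * \<tau>)) 0" for c
    unfolding inner_move_along using dual_normal_nonzero by (intro continuous_intros) auto
  have at_0: "\<nu> r \<bullet> move_along s w (c * 0) = \<nu> r \<bullet> w" for c
    by (simp add: inner_move_along)
  have forward: "move_along s w \<tau> \<in> sign_cell {s, t, r} x \<longleftrightarrow>
      0 \<le> sin \<tau> * ((\<nu> r \<bullet> move_along s w (1 * \<tau>)) * C)" for \<tau>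
    unfolding move_along_in_sign_cell_iff[OF w] C_def by simp
  have backward: "move_along s w (- \<tau>) \<in> sign_cell {s, t, r} x \<longleftrightarrow>
      0 \<le> sin \<tau> * ((\<nu> r \<bullet> move_along s w (-1 * \<tau>)) * - C)" for \<tau>
    unfolding move_along_in_sign_cell_iff[OF w] C_def by simp
  show "(\<exists>e>0. \<forall>\<tau>. 0 < \<tau> \<and> \<tau> < e \<longrightarrow> move_along s w \<tau> \<in> D)
           \<longleftrightarrow> 0 < (\<nu> t \<bullet> cross3 w (\<nu> s)) * (\<nu> t \<bullet> x) * (\<nu> r \<bullet> w) * (\<nu> r \<bullet> x)"
    unfolding D forward sin_mult_nonneg_at_right_iff[OF cont, unfolded at_0, OF nz(2) C] sign_C(1) ..
  show "(\<exists>e>0. \<forall>\<tau>. 0 < \<tau> \<and> \<tau> < e \<longrightarrow> move_along s w (- \<tau>) \<in> D)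
           \<longleftrightarrow> (\<nu> t \<bullet> cross3 w (\<nu> s)) * (\<nu> t \<bullet> x) * (\<nu> r \<bullet> w) * (\<nu> r \<bullet> x) < 0"
    unfolding D backward sin_mult_nonneg_at_right_iff[OF cont, unfolded at_0, OF nz(2) neg_C] sign_C(2) ..
qed

lemma in_out_at_vertex_iff:
  assumes str: "orient s t r \<noteq> 0" and w: "w \<in> dual_line s" "w \<in> dual_line t"
    and x: "\<nu> s \<bullet> x \<noteq> 0" "\<nu> t \<bullet> x \<noteq> 0" "\<nu> r \<bullet> x \<noteq> 0"
  shows "(side_into (sign_cell {s, t, r} x) s w \<and> side_out_of (sign_cell {s, t, r} x) t w) \<or>
         (side_into (sign_cell {s, t, r} x) t w \<and> side_out_of (sign_cell {s, t, r} x) s w)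
         \<longleftrightarrow> 0 < (\<nu> s \<bullet> x) * (\<nu> t \<bullet> x)"
proof -
  let ?u = "cross3 (\<nu> s) (\<nu> t)"
  define \<kappa> where "\<kappa> = w \<bullet> ?u"
  have ws: "\<nu> s \<bullet> w = 0" and wt: "\<nu> t \<bullet> w = 0" and "w \<noteq> 0"
    using w by (auto simp: dual_line_iff S2_iff)
  have k1: "\<nu> t \<bullet> cross3 w (\<nu> s) = \<kappa>"
    unfolding \<kappa>_def by (metis cross_triple inner_commute)
  have k2: "\<nu> s \<bullet> cross3 w (\<nu> t) = - \<kappa>"
    unfolding \<kappa>_def by (metis cross_triple inner_commute cross_skew inner_minus_left)
  have "s \<noteq> t" using str by (auto simp: orient_def)
  then have "?u \<bullet> ?u \<noteq> 0" using cross_dual_normal_nonzero by simp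
  then have "\<kappa> \<noteq> 0"
    using orthogonal_dual_normals_parallel[OF ws wt] \<open>w \<noteq> 0\<close> unfolding \<kappa>_def by force
  have r: "\<nu> r \<bullet> w \<noteq> 0" by (rule dual_lines_not_concurrent[OF str \<open>w \<noteq> 0\<close> ws wt])
  have swap: "sign_cell {t, s, r} x = sign_cell {s, t, r} x" by (simp add: insert_commute)
  have "- \<kappa> \<noteq> 0" using \<open>\<kappa> \<noteq> 0\<close> by simp
  note at_s = side_directions_at_vertex[OF w(1) wt, unfolded k1, OF \<open>\<kappa> \<noteq> 0\<close> r x(2,3) refl]
  note at_t = side_directions_at_vertex[OF w(2) ws, unfolded k2, OF \<open>- \<kappa> \<noteq> 0\<close> r x(1,3) swap[symmetric]]
  define P where "P = \<kappa> * (\<nu> r \<bullet> w) * (\<nu> r \<bullet> x)"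
  have "P \<noteq> 0" using \<open>\<kappa> \<noteq> 0\<close> r x(3) by (simp add: P_def)
  have "side_into (sign_cell {s, t, r} x) s w \<longleftrightarrow> P * (\<nu> t \<bullet> x) < 0"
       "side_out_of (sign_cell {s, t, r} x) s w \<longleftrightarrow> 0 < P * (\<nu> t \<bullet> x)"
       "side_into (sign_cell {s, t, r} x) t w \<longleftrightarrow> 0 < P * (\<nu> s \<bullet> x)"
       "side_out_of (sign_cell {s, t, r} x) t w \<longleftrightarrow> P * (\<nu> s \<bullet> x) < 0"
    unfolding side_into_def side_out_of_def at_s at_t P_def by (simp_all add: ac_simps) auto
  moreover have "(P * b < 0 \<and> P * a < 0 \<or> 0 < P * a \<and> 0 < P * b) \<longleftrightarrow> 0 < a * b"
    if "a \<noteq> 0" "b \<noteq> 0" for a b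
    using that \<open>P \<noteq> 0\<close> by (auto simp: zero_less_mult_iff mult_less_0_iff)
  ultimately show ?thesis using x(1,2) by simp
qed

section \<open>Triangular cells and their exit vertex\<close>

lemma third_element:
  assumes "s \<in> {a, b, c}" "t \<in> {a, b, c}" "s \<noteq> t" "a \<noteq> b" "a \<noteq> c" "b \<noteq> c"
  obtains r where "{s, t, r} = {a, b, c}" "r \<noteq> s" "r \<noteq> t"
proof
  define r where "r = (if a \<noteq> s \<and> a \<noteq> t then a else if b \<noteq> s \<and> b \<noteq> t then b else c)"
  show "{s, t, r} = {a, b, c}" "r \<noteq> s" "r \<noteq> t"
    using assms by (auto simp: r_def)
qed

text \<open>The vertex a* \<inter> b*, taken with the sign that puts it on the side of c* containing x,
  lies in the cone.\<close>

lemma infinite_triangle_side: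
  assumes gp: "general_position S" and abc: "a \<in> S" "b \<in> S" "c \<in> S" "a \<noteq> b" "a \<noteq> c" "b \<noteq> c"
    and x: "\<forall>s\<in>{a, b, c}. \<nu> s \<bullet> x \<noteq> 0"
  shows "infinite (sign_cone {a, b, c} x \<inter> dual_line a)"
proof -
  let ?u = "cross3 (\<nu> a) (\<nu> b)"
  define z where "z = ((\<nu> c \<bullet> ?u) * (\<nu> c \<bullet> x)) *\<^sub>R ?u"
  have "\<nu> c \<bullet> ?u \<noteq> 0"
    using inner_cross_dual_normal[of a b c] general_position_orient[OF gp abc]
    by (simp add: inner_commute)
  moreover have "(\<nu> c \<bullet> z) * (\<nu> c \<bullet> x) = ((\<nu> c \<bullet> ?u) * (\<nu> c \<bullet> x)) * ((\<nu> c \<bullet> ?u) * (\<nu> c \<bullet> x))"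
    by (simp add: z_def)
  ultimately have c: "0 < (\<nu> c \<bullet> z) * (\<nu> c \<bullet> x)"
    using x by (metis insertI1 insert_commute mult_eq_0_iff not_real_square_gt_zero)
  have ab: "\<nu> a \<bullet> z = 0" "\<nu> b \<bullet> z = 0"
    by (simp_all add: z_def dot_cross_self inner_commute[of "\<nu> b"])
  have "general_position {a, b, c}" using gp abc by (auto intro: general_position_subset)
  moreover have "z \<noteq> 0" using c by auto
  moreover have "\<forall>s\<in>{a, b, c}. 0 \<le> (\<nu> s \<bullet> z) * (\<nu> s \<bullet> x)" using ab c by auto
  ultimately show ?thesis
    using infinite_sign_cone_facet[of "{a, b, c}" x z a] x ab by simp
qed

lemma triangular_cell_iff:
  assumes fin: "finite S" and gp: "general_position S"
    and abc: "a \<in> S" "b \<in> S" "c \<in> S" "a \<noteq> b" "a \<noteq> c" "b \<noteq> c"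
  shows "triangular_cell S D a b c \<longleftrightarrow>
    (\<exists>x\<in>arr_complement S. D = sign_cell S x \<and> sign_cone S x = sign_cone {a, b, c} x \<and>
       (\<forall>p\<in>S - {a, b, c}. finite (sign_cone S x \<inter> dual_line p)))"
proof
  assume "triangular_cell S D a b c"
  then have "is_cell S D" and lines: "bounding_lines S D = {a, b, c}"
    by (simp_all add: triangular_cell_def)
  then obtain x where x: "x \<in> arr_complement S" and D: "D = sign_cell S x"
    using is_cell_iff[of S D] abc by auto
  with lines have "\<forall>p\<in>S - {a, b, c}. finite (sign_cone S x \<inter> dual_line p)"
    by (auto simp: bounding_lines_sign_cell)
  moreover have "sign_cone S x = sign_cone {a, b, c} x"
    using x abc calculation
    by (intro sign_cone_eq_if_finite_facets[OF fin gp]) (auto simp: arr_complement_iff)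
  ultimately show "\<exists>x\<in>arr_complement S. D = sign_cell S x \<and> sign_cone S x = sign_cone {a, b, c} x \<and>
       (\<forall>p\<in>S - {a, b, c}. finite (sign_cone S x \<inter> dual_line p))"
    using x D by blast
next
  assume "\<exists>x\<in>arr_complement S. D = sign_cell S x \<and> sign_cone S x = sign_cone {a, b, c} x \<and>
       (\<forall>p\<in>S - {a, b, c}. finite (sign_cone S x \<inter> dual_line p))"
  then obtain x where x: "x \<in> arr_complement S" and D: "D = sign_cell S x"
    and tri: "sign_cone S x = sign_cone {a, b, c} x"
    and others: "\<forall>p\<in>S - {a, b, c}. finite (sign_cone S x \<inter> dual_line p)" by blast
  have nz: "\<forall>s\<in>{a, b, c}. \<nu> s \<bullet> x \<noteq> 0" using x abc by (simp add: arr_complement_iff)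
  have "infinite (sign_cone S x \<inter> dual_line s)" if "s \<in> {a, b, c}" for s
    using that infinite_triangle_side[OF gp abc nz] nz
      infinite_triangle_side[OF gp abc(2,1,3) abc(4)[symmetric] abc(6,5)]
      infinite_triangle_side[OF gp abc(3,1,2) abc(5,6)[symmetric] abc(4)]
    unfolding tri by (auto simp: insert_commute)
  then have "bounding_lines S D = {a, b, c}"
    using others abc by (auto simp: D bounding_lines_sign_cell)
  moreover have "is_cell S D" using is_cell_iff[of S D] abc x D by auto
  ultimately show "triangular_cell S D a b c" by (simp add: triangular_cell_def)
qed

lemma inner_vertical_infinity: "\<nu> s \<bullet> vertical_infinity = -1"
  by (simp add: dual_normal_def vertical_infinity_def inner_vec_def sum_3)

lemma vertical_infinity_in_sign_cell_iff:
  "vertical_infinity \<in> sign_cell T x \<longleftrightarrow> (\<forall>s\<in>T. \<nu> s \<bullet> x \<le> 0) \<or> (\<forall>s\<in>T. 0 \<le> \<nu> s \<bullet> x)"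
proof -
  have "vertical_infinity \<in> S2"
    by (simp add: S2_iff norm_eq_1 vertical_infinity_def inner_vec_def sum_3)
  then show ?thesis
    by (simp add: sign_cell_iff sign_cone_def uminus_sign_cone_iff inner_vertical_infinity S2_iff)
qed

lemma vertex_in_sign_cell:
  assumes "w \<in> dual_line s" "w \<in> dual_line t"
  shows "w \<in> sign_cell {s, t, r} x"
  using assms by (cases "0 \<le> (\<nu> r \<bullet> w) * (\<nu> r \<bullet> x)")
    (auto simp: sign_cell_iff sign_cone_def uminus_sign_cone_iff dual_line_iff S2_iff)

lemma in_out_at_triangle_vertex_iff:
  assumes gp: "general_position S" and abc: "a \<in> S" "b \<in> S" "c \<in> S" "a \<noteq> b" "a \<noteq> c" "b \<noteq> c"
    and D: "D = sign_cell {a, b, c} x" and x: "\<forall>s\<in>{a, b, c}. \<nu> s \<bullet> x \<noteq> 0"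
    and st: "s \<in> {a, b, c}" "t \<in> {a, b, c}" "s \<noteq> t" and w: "w \<in> dual_line s" "w \<in> dual_line t"
  shows "w \<in> D"
    and "(side_into D s w \<and> side_out_of D t w) \<or> (side_into D t w \<and> side_out_of D s w)
         \<longleftrightarrow> 0 < (\<nu> s \<bullet> x) * (\<nu> t \<bullet> x)"
proof -
  obtain r where r: "{s, t, r} = {a, b, c}" "r \<noteq> s" "r \<noteq> t"
    using third_element[OF st abc(4-6)] .
  have "r \<in> {a, b, c}" unfolding r(1)[symmetric] by simp
  have "{a, b, c} \<subseteq> S" using abc by simp
  then have "orient s t r \<noteq> 0"
    using general_position_orient[OF gp, of s t r] st \<open>r \<in> {a, b, c}\<close> r(2,3) by blast
  moreover have "\<nu> s \<bullet> x \<noteq> 0" "\<nu> t \<bullet> x \<noteq> 0" "\<nu> r \<bullet> x \<noteq> 0"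
    using x st \<open>r \<in> {a, b, c}\<close> by blast+
  moreover have D': "D = sign_cell {s, t, r} x" using D r(1) by simp
  ultimately show "(side_into D s w \<and> side_out_of D t w) \<or> (side_into D t w \<and> side_out_of D s w)
         \<longleftrightarrow> 0 < (\<nu> s \<bullet> x) * (\<nu> t \<bullet> x)"
    using in_out_at_vertex_iff[OF _ w] by simp
  show "w \<in> D" using vertex_in_sign_cell[OF w, of r x] D' by simp
qed

lemma in_out_vertex_triangle_iff:
  assumes gp: "general_position S" and abc: "a \<in> S" "b \<in> S" "c \<in> S" "a \<noteq> b" "a \<noteq> c" "b \<noteq> c"
    and lines: "bounding_lines S D = {a, b, c}" and D: "D = sign_cell {a, b, c} x"
    and x: "\<forall>s\<in>{a, b, c}. \<nu> s \<bullet> x \<noteq> 0"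
  shows "in_out_vertex S D w \<longleftrightarrow>
    (\<exists>s\<in>{a, b, c}. \<exists>t\<in>{a, b, c}. s \<noteq> t \<and> w \<in> dual_line s \<and> w \<in> dual_line t \<and>
       0 < (\<nu> s \<bullet> x) * (\<nu> t \<bullet> x))"
proof -
  note vertex = in_out_at_triangle_vertex_iff[OF gp abc D x]
  show ?thesis
  proof
    assume "in_out_vertex S D w"
    then obtain s t where st: "s \<in> bounding_lines S D" "t \<in> bounding_lines S D" "s \<noteq> t"
        "w \<in> dual_line s" "w \<in> dual_line t" "side_into D s w" "side_out_of D t w"
      unfolding in_out_vertex_def by blast
    then have "s \<in> {a, b, c}" "t \<in> {a, b, c}" using lines by simp_all
    with st have "0 < (\<nu> s \<bullet> x) * (\<nu> t \<bullet> x)" using vertex(2)[of s t] by blast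
    with st \<open>s \<in> {a, b, c}\<close> \<open>t \<in> {a, b, c}\<close>
    show "\<exists>s\<in>{a, b, c}. \<exists>t\<in>{a, b, c}. s \<noteq> t \<and> w \<in> dual_line s \<and> w \<in> dual_line t \<and>
       0 < (\<nu> s \<bullet> x) * (\<nu> t \<bullet> x)" by blast
  next
    assume "\<exists>s\<in>{a, b, c}. \<exists>t\<in>{a, b, c}. s \<noteq> t \<and> w \<in> dual_line s \<and> w \<in> dual_line t \<and>
       0 < (\<nu> s \<bullet> x) * (\<nu> t \<bullet> x)"
    then obtain s t where st: "s \<in> {a, b, c}" "t \<in> {a, b, c}" "s \<noteq> t"
        "w \<in> dual_line s" "w \<in> dual_line t" "0 < (\<nu> s \<bullet> x) * (\<nu> t \<bullet> x)"
      by (elim bexE conjE) (rule that)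
    then have "w \<in> D" and sides: "(side_into D s w \<and> side_out_of D t w) \<or> (side_into D t w \<and> side_out_of D s w)"
      using vertex[OF st(1-5)] by blast+
    have bl: "s \<in> bounding_lines S D" "t \<in> bounding_lines S D" using st(1,2) lines by simp_all
    from sides show "in_out_vertex S D w"
    proof
      assume "side_into D s w \<and> side_out_of D t w"
      then show ?thesis unfolding in_out_vertex_def using \<open>w \<in> D\<close> bl st(3-5) by blast
    next
      assume "side_into D t w \<and> side_out_of D s w"
      then show ?thesis unfolding in_out_vertex_def using \<open>w \<in> D\<close> bl st(3)[symmetric] st(4,5) by blast
    qed
  qed
qed

lemma sign_product_trans:
  fixes A B C :: real
  shows "0 < A * B \<Longrightarrow> A * C < 0 \<Longrightarrow> B * C < 0"
  by (auto simp: zero_less_mult_iff mult_less_0_iff)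

text \<open>All three vertices of a triangle whose lines have a common sign on the cell are
  in-out vertices (the sides form a directed cycle), so an exit vertex a*\<inter>b* forces the
  opposite signs at c.\<close>

lemma exit_vertex_meet_iff:
  assumes gp: "general_position S" and abc: "a \<in> S" "b \<in> S" "c \<in> S" "a \<noteq> b" "a \<noteq> c" "b \<noteq> c"
    and lines: "bounding_lines S D = {a, b, c}" and D: "D = sign_cell {a, b, c} x"
    and x: "\<forall>s\<in>{a, b, c}. \<nu> s \<bullet> x \<noteq> 0"
  shows "is_exit_vertex S D (meet a b) \<longleftrightarrow>
    0 < (\<nu> a \<bullet> x) * (\<nu> b \<bullet> x) \<and> (\<nu> a \<bullet> x) * (\<nu> c \<bullet> x) < 0"
proof -
  note io = in_out_vertex_triangle_iff[OF gp abc lines D x]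
  have m: "meet a b \<in> dual_line a" "meet a b \<in> dual_line b"
    using meet_on_dual_lines[OF abc(4)] .
  have "meet a b \<notin> dual_line c" "meet a c \<notin> dual_line b"
    using meet_not_on_dual_line general_position_orient[OF gp] abc by blast+
  then have not_c: "w \<notin> dual_line c" if "w = meet a b \<or> w = - meet a b" for w
    using that uminus_dual_line_iff by blast
  show ?thesis
  proof
    assume exit: "is_exit_vertex S D (meet a b)"
    then have "in_out_vertex S D (meet a b)" by (simp add: is_exit_vertex_def)
    then have ab: "0 < (\<nu> a \<bullet> x) * (\<nu> b \<bullet> x)"
      unfolding io using not_c by (auto simp: mult.commute)
    have "(\<nu> a \<bullet> x) * (\<nu> c \<bullet> x) < 0"
    proof (rule ccontr)
      assume "\<not> ?thesis"
      then have "0 < (\<nu> a \<bullet> x) * (\<nu> c \<bullet> x)" using x by (simp add: less_le)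
      then have "in_out_vertex S D (meet a c)"
        unfolding io using meet_on_dual_lines[OF abc(5)] abc by blast
      then have "meet a c = meet a b \<or> meet a c = - meet a b"
        using exit by (simp add: is_exit_vertex_def)
      then show False using not_c meet_on_dual_lines[OF abc(5)] by blast
    qed
    with ab show "0 < (\<nu> a \<bullet> x) * (\<nu> b \<bullet> x) \<and> (\<nu> a \<bullet> x) * (\<nu> c \<bullet> x) < 0" by blast
  next
    assume signs: "0 < (\<nu> a \<bullet> x) * (\<nu> b \<bullet> x) \<and> (\<nu> a \<bullet> x) * (\<nu> c \<bullet> x) < 0"
    then have "(\<nu> b \<bullet> x) * (\<nu> c \<bullet> x) < 0" by (blast intro: sign_product_trans)
    then have "w \<in> dual_line a \<and> w \<in> dual_line b" if "in_out_vertex S D w" for w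
      using that signs unfolding io by (auto simp: mult.commute)
    then have "w = meet a b \<or> w = - meet a b" if "in_out_vertex S D w" for w
      using that meet_unique[OF abc(4)] by blast
    moreover have "in_out_vertex S D (meet a b)"
      unfolding io using m signs abc by blast
    ultimately show "is_exit_vertex S D (meet a b)" by (simp add: is_exit_vertex_def)
  qed
qed

section \<open>Exit edges\<close>

lemma orient_cyclic: "orient b c a = orient a b c"
  by (simp add: orient_def algebra_simps)

lemma orient_degenerate: "orient a b b = 0" "orient a a b = 0" "orient a b a = 0"
  by (simp_all add: orient_def)

text \<open>If the line through a and p separates b from c, the vertex a* \<inter> p* lies (up to sign)
  in the closed triangle cone, and hence on the boundary of the cell.\<close>

lemma separating_line_meets_cell:
  assumes fin: "finite S" and gp: "general_position S" and x: "\<forall>s\<in>S. \<nu> s \<bullet> x \<noteq> 0"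
    and p: "p \<in> S" and sub: "sign_cone {a, b, c} x \<subseteq> sign_cone S x"
    and bc: "(\<nu> b \<bullet> x) * (\<nu> c \<bullet> x) < 0" and sep: "orient a p b * orient a p c < 0"
  shows "infinite (sign_cone S x \<inter> dual_line p)"
proof -
  let ?w = "cross3 (\<nu> a) (\<nu> p)"
  define z where "z = ((\<nu> b \<bullet> ?w) * (\<nu> b \<bullet> x)) *\<^sub>R ?w"
  have wbc: "(\<nu> b \<bullet> ?w) * (\<nu> c \<bullet> ?w) < 0"
    using sep by (simp add: inner_commute[of "\<nu> b"] inner_commute[of "\<nu> c"] inner_cross_dual_normal)
  have ap: "\<nu> a \<bullet> z = 0" "\<nu> p \<bullet> z = 0"
    by (simp_all add: z_def dot_cross_self inner_commute[of "\<nu> p"])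
  have "(\<nu> b \<bullet> z) * (\<nu> b \<bullet> x) = ((\<nu> b \<bullet> ?w) * (\<nu> b \<bullet> x)) * ((\<nu> b \<bullet> ?w) * (\<nu> b \<bullet> x))"
    by (simp add: z_def)
  moreover have "(\<nu> b \<bullet> ?w) * (\<nu> b \<bullet> x) \<noteq> 0" using wbc bc by auto
  ultimately have zb: "0 < (\<nu> b \<bullet> z) * (\<nu> b \<bullet> x)" by (metis not_real_square_gt_zero)
  have zc_eq: "(\<nu> c \<bullet> z) * (\<nu> c \<bullet> x) = ((\<nu> b \<bullet> ?w) * (\<nu> c \<bullet> ?w)) * ((\<nu> b \<bullet> x) * (\<nu> c \<bullet> x))"
    by (simp add: z_def ac_simps)
  have zc: "0 < (\<nu> c \<bullet> z) * (\<nu> c \<bullet> x)"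
    unfolding zc_eq using wbc bc by (rule mult_neg_neg)
  have "z \<noteq> 0" using zb by auto
  moreover have "sgn z \<in> sign_cone {a, b, c} x"
    using \<open>z \<noteq> 0\<close> ap zb zc by (simp add: sgn_in_sign_cone_iff)
  then have "sgn z \<in> sign_cone S x" using sub by blast
  then have "\<forall>s\<in>S. 0 \<le> (\<nu> s \<bullet> z) * (\<nu> s \<bullet> x)"
    using \<open>z \<noteq> 0\<close> by (simp add: sgn_in_sign_cone_iff)
  ultimately show ?thesis by (rule infinite_sign_cone_facet[OF fin gp x _ _ p ap(2)])
qed

lemma exit_edge_if_sign_pattern:
  assumes fin: "finite S" and gp: "general_position S"
    and abc: "a \<in> S" "b \<in> S" "c \<in> S" "a \<noteq> b" "a \<noteq> c" "b \<noteq> c"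
    and x: "\<forall>s\<in>S. \<nu> s \<bullet> x \<noteq> 0" and tri: "sign_cone S x = sign_cone {a, b, c} x"
    and others: "\<forall>p\<in>S - {a, b, c}. finite (sign_cone S x \<inter> dual_line p)"
    and ac: "(\<nu> a \<bullet> x) * (\<nu> c \<bullet> x) < 0" and bc: "(\<nu> b \<bullet> x) * (\<nu> c \<bullet> x) < 0"
  shows "exit_edge S a b c"
proof -
  have no_separator: "\<not> (\<exists>p\<in>S. p \<noteq> u \<and> strictly_separates u p v w)"
    if vw: "(\<nu> v \<bullet> x) * (\<nu> w \<bullet> x) < 0" and uvw: "{u, v, w} = {a, b, c}" for u v w
  proof
    assume "\<exists>p\<in>S. p \<noteq> u \<and> strictly_separates u p v w"
    then obtain p where p: "p \<in> S" "p \<noteq> u" and sep: "orient u p v * orient u p w < 0"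
      by (auto simp: strictly_separates_def)
    then have "p \<noteq> v" "p \<noteq> w" by (auto simp: orient_degenerate)
    with p(2) have "p \<notin> {a, b, c}" unfolding uvw[symmetric] by simp
    moreover have "infinite (sign_cone S x \<inter> dual_line p)"
      using separating_line_meets_cell[OF fin gp x p(1) _ vw sep] tri uvw by simp
    ultimately show False using others p(1) by blast
  qed
  have "\<not> (\<exists>p\<in>S. p \<noteq> a \<and> strictly_separates a p b c)" using no_separator[OF bc] by simp
  moreover have "\<not> (\<exists>p\<in>S. p \<noteq> b \<and> strictly_separates b p a c)"
    using no_separator[OF ac] by (simp add: insert_commute)
  ultimately show ?thesis unfolding exit_edge_def using abc by blast
qed

lemma exit_edge_orient_signs:
  assumes gp: "general_position S" and abc: "a \<in> S" "b \<in> S" "c \<in> S" "a \<noteq> b" "a \<noteq> c" "b \<noteq> c"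
    and exit: "exit_edge S a b c" and p: "p \<in> S" "p \<notin> {a, b, c}"
  shows "orient a b p * orient b c p < 0" "orient a b p * orient c a p < 0"
proof -
  have pa: "a \<noteq> p" "b \<noteq> p" "c \<noteq> p" using p(2) by auto
  have nz: "orient a b p \<noteq> 0" "orient b c p \<noteq> 0" "orient c a p \<noteq> 0"
    using general_position_orient[OF gp abc(1,2) p(1) abc(4) pa(1,2)]
      general_position_orient[OF gp abc(2,3) p(1) abc(6) pa(2,3)]
      general_position_orient[OF gp abc(3,1) p(1) abc(5)[symmetric] pa(3,1)] .
  have "0 \<le> orient a p b * orient a p c" "0 \<le> orient b p a * orient b p c"
    using exit p unfolding exit_edge_def strictly_separates_def by (auto simp: not_less)
  moreover have "orient a p b * orient a p c = - (orient a b p * orient c a p)"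
    "orient b p a * orient b p c = - (orient a b p * orient b c p)"
    by (simp_all add: orient_def algebra_simps)
  ultimately have "orient a b p * orient c a p \<le> 0" "orient a b p * orient b c p \<le> 0"
    by linarith+
  moreover have "orient a b p * orient c a p \<noteq> 0" "orient a b p * orient b c p \<noteq> 0"
    using nz by simp_all
  ultimately show "orient a b p * orient b c p < 0" "orient a b p * orient c a p < 0"
    by (simp_all add: less_le)
qed

text \<open>A signed sum of the three vertices of the triangle a*b*c*; it lies inside the one of the
  four triangles bounded by a*, b*, c* whose exit vertex is a* \<inter> b*.\<close>

definition exit_point :: "real \<times> real \<Rightarrow> real \<times> real \<Rightarrow> real \<times> real \<Rightarrow> real^3" where
  "exit_point a b c = cross3 (\<nu> a) (\<nu> b) - cross3 (\<nu> b) (\<nu> c) - cross3 (\<nu> c) (\<nu> a)"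

lemma inner_exit_point: "\<nu> p \<bullet> exit_point a b c = orient b c p + orient c a p - orient a b p"
  by (simp add: exit_point_def cross3_simps dual_normal_def orient_def)

lemma inner_exit_point_vertices:
  "\<nu> a \<bullet> exit_point a b c = orient a b c" "\<nu> b \<bullet> exit_point a b c = orient a b c"
  "\<nu> c \<bullet> exit_point a b c = - orient a b c"
  by (simp_all add: inner_exit_point orient_cyclic orient_degenerate)

lemma dual_normal_decomposition:
  "orient a b c * (\<nu> p \<bullet> v)
     = (\<nu> a \<bullet> v) * orient b c p + (\<nu> b \<bullet> v) * orient c a p + (\<nu> c \<bullet> v) * orient a b p"
  by (simp add: inner_vec_def sum_3 dual_normal_def orient_def algebra_simps)

lemma nonneg_combination_pos:
  fixes a1 a2 a3 q1 q2 q3 :: real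
  assumes "0 \<le> a1" "0 \<le> a2" "0 \<le> a3" "a1 \<noteq> 0 \<or> a2 \<noteq> 0 \<or> a3 \<noteq> 0"
    and "0 < q1" "0 < q2" "0 < q3"
  shows "0 < a1 * q1 + a2 * q2 + a3 * q3"
proof -
  have "0 \<le> a1 * q1" "0 \<le> a2 * q2" "0 \<le> a3 * q3" using assms by simp_all
  moreover have "0 < a1 * q1 \<or> 0 < a2 * q2 \<or> 0 < a3 * q3"
    using assms by (auto simp: less_le)
  ultimately show ?thesis by linarith
qed

lemma exit_edge_cone_avoids_line:
  assumes gp: "general_position S" and abc: "a \<in> S" "b \<in> S" "c \<in> S" "a \<noteq> b" "a \<noteq> c" "b \<noteq> c"
    and exit: "exit_edge S a b c" and p: "p \<in> S" "p \<notin> {a, b, c}"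
    and v: "v \<in> sign_cone {a, b, c} (exit_point a b c)"
  shows "0 < (\<nu> p \<bullet> v) * (\<nu> p \<bullet> exit_point a b c)"
proof -
  define \<Delta> where "\<Delta> = orient a b c"
  define q1 q2 q3 where "q1 = orient b c p" and "q2 = orient c a p" and "q3 = - orient a b p"
  define Q where "Q = \<nu> p \<bullet> exit_point a b c"
  have "\<Delta> \<noteq> 0" unfolding \<Delta>_def using general_position_orient[OF gp abc] .
  have Q: "Q = q1 + q2 + q3" by (simp add: Q_def q1_def q2_def q3_def inner_exit_point)
  have "0 < q1 * Q" "0 < q2 * Q" "0 < q3 * Q"
    using exit_edge_orient_signs[OF gp abc exit p] unfolding Q q1_def q2_def q3_def
    by (auto simp: zero_less_mult_iff mult_less_0_iff)
  moreover have "0 \<le> (\<nu> a \<bullet> v) * \<Delta>" "0 \<le> (\<nu> b \<bullet> v) * \<Delta>" "0 \<le> (\<nu> c \<bullet> v) * - \<Delta>"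
    using v by (simp_all add: sign_cone_def inner_exit_point_vertices \<Delta>_def)
  moreover have "v \<noteq> 0" using v by (auto simp: sign_cone_def S2_iff)
  then have "\<nu> a \<bullet> v \<noteq> 0 \<or> \<nu> b \<bullet> v \<noteq> 0 \<or> \<nu> c \<bullet> v \<noteq> 0"
    using dual_lines_not_concurrent[OF \<open>\<Delta> \<noteq> 0\<close>[unfolded \<Delta>_def]] by blast
  ultimately have "0 < (\<nu> a \<bullet> v) * \<Delta> * (q1 * Q) + (\<nu> b \<bullet> v) * \<Delta> * (q2 * Q) + (\<nu> c \<bullet> v) * - \<Delta> * (q3 * Q)"
    using \<open>\<Delta> \<noteq> 0\<close> by (intro nonneg_combination_pos) auto
  also have "\<dots> = (\<Delta> * \<Delta>) * ((\<nu> p \<bullet> v) * Q)"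
    using dual_normal_decomposition[of a b c p v]
    by (simp add: \<Delta>_def q1_def q2_def q3_def algebra_simps)
  finally show ?thesis
    using \<open>\<Delta> \<noteq> 0\<close> by (simp add: Q_def zero_less_mult_iff)
qed

lemma exit_edge_exit_point_cone:
  assumes gp: "general_position S" and abc: "a \<in> S" "b \<in> S" "c \<in> S" "a \<noteq> b" "a \<noteq> c" "b \<noteq> c"
    and exit: "exit_edge S a b c"
  shows "\<forall>s\<in>S. \<nu> s \<bullet> exit_point a b c \<noteq> 0"
    and "sign_cone S (exit_point a b c) = sign_cone {a, b, c} (exit_point a b c)"
    and "\<forall>p\<in>S - {a, b, c}. sign_cone S (exit_point a b c) \<inter> dual_line p = {}"
proof -
  let ?x = "exit_point a b c"
  have avoid: "0 < (\<nu> p \<bullet> v) * (\<nu> p \<bullet> ?x)"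
    if "p \<in> S - {a, b, c}" "v \<in> sign_cone {a, b, c} ?x" for p v
    using that by (intro exit_edge_cone_avoids_line[OF gp abc exit]) auto
  show "\<forall>s\<in>S. \<nu> s \<bullet> ?x \<noteq> 0"
  proof
    fix s assume "s \<in> S"
    show "\<nu> s \<bullet> ?x \<noteq> 0"
    proof (cases "s \<in> {a, b, c}")
      case True
      then show ?thesis
        using general_position_orient[OF gp abc] by (auto simp: inner_exit_point_vertices)
    next
      case False
      then show ?thesis
        using exit_edge_orient_signs[OF gp abc exit \<open>s \<in> S\<close> False]
        by (auto simp: inner_exit_point mult_less_0_iff)
    qed
  qed
  have "sign_cone {a, b, c} ?x \<subseteq> sign_cone S ?x"
    using avoid by (force simp: sign_cone_def less_imp_le)
  then show tri: "sign_cone S ?x = sign_cone {a, b, c} ?x"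
    using sign_cone_antimono[of "{a, b, c}" S ?x] abc by simp
  show "\<forall>p\<in>S - {a, b, c}. sign_cone S ?x \<inter> dual_line p = {}"
    using avoid unfolding tri by (fastforce simp: dual_line_iff)
qed

lemma exit_edge_imp_sign_pattern:
  assumes gp: "general_position S" and abc: "a \<in> S" "b \<in> S" "c \<in> S" "a \<noteq> b" "a \<noteq> c" "b \<noteq> c"
    and exit: "exit_edge S a b c"
  obtains x where "x \<in> arr_complement S" "sign_cone S x = sign_cone {a, b, c} x"
    "\<forall>p\<in>S - {a, b, c}. sign_cone S x \<inter> dual_line p = {}"
    "0 < (\<nu> a \<bullet> x) * (\<nu> b \<bullet> x)" "(\<nu> a \<bullet> x) * (\<nu> c \<bullet> x) < 0"
proof
  define x0 where "x0 = exit_point a b c"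
  note x0 = exit_edge_exit_point_cone[OF gp abc exit, folded x0_def]
  have "x0 \<noteq> 0" using x0(1) abc(1) by auto
  define x where "x = sgn x0"
  have same_cone: "sign_cone T x = sign_cone T x0" for T
    using sign_cone_scaleR[of "inverse (norm x0)" T x0] \<open>x0 \<noteq> 0\<close>
    by (simp add: x_def sgn_div_norm)
  have inner_x: "\<nu> s \<bullet> x = (\<nu> s \<bullet> x0) / norm x0" for s
    by (simp add: x_def sgn_div_norm divide_inverse_commute)
  have "x \<in> S2" using \<open>x0 \<noteq> 0\<close> by (simp add: x_def sgn_in_S2)
  then show "x \<in> arr_complement S"
    using x0(1) \<open>x0 \<noteq> 0\<close> by (simp add: arr_complement_iff inner_x)
  show "sign_cone S x = sign_cone {a, b, c} x" "\<forall>p\<in>S - {a, b, c}. sign_cone S x \<inter> dual_line p = {}"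
    using x0(2,3) by (simp_all add: same_cone)
  have "orient a b c \<noteq> 0" using general_position_orient[OF gp abc] .
  then have "0 < orient a b c * orient a b c" by (metis not_real_square_gt_zero)
  then have "0 < orient a b c * orient a b c / (norm x0 * norm x0)"
    using \<open>x0 \<noteq> 0\<close> by simp
  then show "0 < (\<nu> a \<bullet> x) * (\<nu> b \<bullet> x)" "(\<nu> a \<bullet> x) * (\<nu> c \<bullet> x) < 0"
    by (simp_all add: inner_x x0_def inner_exit_point_vertices)
qed

lemma triangular_cell_exit_iff:
  assumes gp: "general_position S" and abc: "a \<in> S" "b \<in> S" "c \<in> S" "a \<noteq> b" "a \<noteq> c" "b \<noteq> c"
    and cell: "triangular_cell S D a b c" and x: "x \<in> arr_complement S"
    and D: "D = sign_cell S x" and tri: "sign_cone S x = sign_cone {a, b, c} x"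
  shows "\<not> marked_cell S D \<and> is_witness_line S D c \<and> is_exit_vertex S D (meet a b) \<longleftrightarrow>
    0 < (\<nu> a \<bullet> x) * (\<nu> b \<bullet> x) \<and> (\<nu> a \<bullet> x) * (\<nu> c \<bullet> x) < 0"
proof -
  have D3: "D = sign_cell {a, b, c} x" using tri by (simp add: D sign_cell_def)
  have nz: "\<forall>s\<in>{a, b, c}. \<nu> s \<bullet> x \<noteq> 0" using x abc(1-3) by (simp add: arr_complement_iff)
  have lines: "bounding_lines S D = {a, b, c}" and "is_cell S D"
    using cell by (simp_all add: triangular_cell_def)
  note exit_iff = exit_vertex_meet_iff[OF gp abc lines D3 nz]
  have "meet a b \<notin> dual_line c"
    by (rule meet_not_on_dual_line[OF general_position_orient[OF gp abc]])
  then have "is_witness_line S D c" if "is_exit_vertex S D (meet a b)"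
    using that lines unfolding is_witness_line_def by auto
  moreover have "\<not> marked_cell S D" if "0 < (\<nu> a \<bullet> x) * (\<nu> b \<bullet> x)" "(\<nu> a \<bullet> x) * (\<nu> c \<bullet> x) < 0"
    using that by (auto simp: marked_cell_def D3 vertical_infinity_in_sign_cell_iff
        zero_less_mult_iff mult_less_0_iff)
  ultimately show ?thesis using exit_iff by blast
qed

theorem theorem3:
  fixes S :: "(real \<times> real) set" and a b c :: "real \<times> real"
  assumes "finite S" and "general_position S"
    and "a \<in> S" and "b \<in> S" and "c \<in> S"
    and "a \<noteq> b" and "a \<noteq> c" and "b \<noteq> c"
  shows "exit_edge S a b c \<longleftrightarrow>
    (\<exists>D. triangular_cell S D a b c \<and> \<not> marked_cell S D \<and>
         is_witness_line S D c \<and> is_exit_vertex S D (meet a b))"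
proof
  assume "exit_edge S a b c"
  then obtain x where x: "x \<in> arr_complement S" and tri: "sign_cone S x = sign_cone {a, b, c} x"
    and avoid: "\<forall>p\<in>S - {a, b, c}. sign_cone S x \<inter> dual_line p = {}"
    and signs: "0 < (\<nu> a \<bullet> x) * (\<nu> b \<bullet> x)" "(\<nu> a \<bullet> x) * (\<nu> c \<bullet> x) < 0"
    using exit_edge_imp_sign_pattern[OF assms(2-8)] by blast
  have cell: "triangular_cell S (sign_cell S x) a b c"
    unfolding triangular_cell_iff[OF assms] using tri avoid by (intro bexI[OF _ x]) simp
  with signs show "\<exists>D. triangular_cell S D a b c \<and> \<not> marked_cell S D \<and>
      is_witness_line S D c \<and> is_exit_vertex S D (meet a b)"
    using triangular_cell_exit_iff[OF assms(2-8) cell x refl tri] by blast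
next
  assume "\<exists>D. triangular_cell S D a b c \<and> \<not> marked_cell S D \<and>
      is_witness_line S D c \<and> is_exit_vertex S D (meet a b)"
  then obtain D where cell: "triangular_cell S D a b c"
    and exit: "\<not> marked_cell S D \<and> is_witness_line S D c \<and> is_exit_vertex S D (meet a b)" by blast
  then obtain x where x: "x \<in> arr_complement S" and D: "D = sign_cell S x"
    and tri: "sign_cone S x = sign_cone {a, b, c} x"
    and others: "\<forall>p\<in>S - {a, b, c}. finite (sign_cone S x \<inter> dual_line p)"
    using triangular_cell_iff[OF assms] by blast
  have "0 < (\<nu> a \<bullet> x) * (\<nu> b \<bullet> x)" "(\<nu> a \<bullet> x) * (\<nu> c \<bullet> x) < 0"
    using exit triangular_cell_exit_iff[OF assms(2-8) cell x D tri] by blast+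
  moreover have "\<forall>s\<in>S. \<nu> s \<bullet> x \<noteq> 0" using x by (simp add: arr_complement_iff)
  ultimately show "exit_edge S a b c"
    using exit_edge_if_sign_pattern[OF assms _ tri others] sign_product_trans by blast
qed

end
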